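(* Let $P,Q\in\mathbb{P}$ and suppose $P(\omega^t)>0$ for every cylinder $\omega^t$. If $P$ merges with $Q$, then $Q\ll P$.
   Context: Let $\Omega=\{0,1\}^{\mathbb N}$ (the set of infinite $0$-$1$ sequences, called paths), with the product topology. For $\omega\in\Omega$ and $t\ge 0$, $\omega^t$ denotes the cylinder of length $t$ with base $\omega$, i.e. the set of all paths agreeing with $\omega$ in the first $t$ coordinates ($\omega^0=\Omega$). Fix a $\sigma$-algebra $\Sigma$ of subsets of $\Omega$ containing all cylinders. $\mathbb P$ denotes the set of finitely additive probability measures on $(\Omega,\Sigma)$. For $R\in\mathbb P$, $E\in\Sigma$ and a cylinder $\omega^t$ with $R(\omega^t)>0$, write $R(E\mid\omega^t)=R(E\cap\omega^t)/R(\omega^t)$. For $P,Q\in\mathbb P$, $P$ merges with $Q$ if for every $\varepsilon>0$, $\lim_{t\to\infty} Q\big(\{\omega:\sup_{E\in\Sigma}|P(E\mid\omega^t)-Q(E\mid\omega^t)|>\varepsilon\}\big)=0$ (the set is a union of cylinders of length $t$; cylinders with $Q(\omega^t)=0$ are irrelevant, and a cylinder with $Q(\omega^t)>0=P(\omega^t)$ is counted as belonging to the set). $Q$ is absolutely continuous with respect to $P$, written $Q\ll P$, if for every sequence $(E_n)$ in $\Sigma$, $P(E_n)\to 0$ implies $Q(E_n)\to 0$. *)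

theory Defs
  imports "HOL-Analysis.Analysis"
begin

type_synonym path = "nat \<Rightarrow> bool"

definition cyl :: "path \<Rightarrow> nat \<Rightarrow> path set" where
  "cyl \<omega> t = {\<eta>. \<forall>i<t. \<eta> i = \<omega> i}"

definition fa_prob :: "path set set \<Rightarrow> (path set \<Rightarrow> real) \<Rightarrow> bool" where
  "fa_prob S R \<longleftrightarrow>
     (\<forall>E\<in>S. 0 \<le> R E) \<and> R UNIV = 1 \<and>
     (\<forall>A\<in>S. \<forall>B\<in>S. A \<inter> B = {} \<longrightarrow> R (A \<union> B) = R A + R B)"

definition cond_prob :: "(path set \<Rightarrow> real) \<Rightarrow> path set \<Rightarrow> path \<Rightarrow> nat \<Rightarrow> real" where
  "cond_prob R E \<omega> t = R (E \<inter> cyl \<omega> t) / R (cyl \<omega> t)"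

text \<open>The set of paths at which P and Q are more than \<epsilon> apart at time t
  (cylinders with Q-measure 0 are excluded, cylinders with Q > 0 = P are included).
  sup_{E} |...| > \<epsilon> is written as: some E has |...| > \<epsilon>.\<close>
definition bad_set :: "path set set \<Rightarrow> (path set \<Rightarrow> real) \<Rightarrow> (path set \<Rightarrow> real) \<Rightarrow> real \<Rightarrow> nat \<Rightarrow> path set" where
  "bad_set S P Q \<epsilon> t = {\<omega>. Q (cyl \<omega> t) > 0 \<and>
      (P (cyl \<omega> t) = 0 \<or> (\<exists>E\<in>S. \<bar>cond_prob P E \<omega> t - cond_prob Q E \<omega> t\<bar> > \<epsilon>))}"

definition merges :: "path set set \<Rightarrow> (path set \<Rightarrow> real) \<Rightarrow> (path set \<Rightarrow> real) \<Rightarrow> bool" where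
  "merges S P Q \<longleftrightarrow> (\<forall>\<epsilon>>0. (\<lambda>t. Q (bad_set S P Q \<epsilon> t)) \<longlonglongrightarrow> 0)"

definition abs_cont :: "path set set \<Rightarrow> (path set \<Rightarrow> real) \<Rightarrow> (path set \<Rightarrow> real) \<Rightarrow> bool" where
  "abs_cont S Q P \<longleftrightarrow>
     (\<forall>E :: nat \<Rightarrow> path set. (\<forall>n. E n \<in> S) \<longrightarrow> (\<lambda>n. P (E n)) \<longlonglongrightarrow> 0 \<longrightarrow> (\<lambda>n. Q (E n)) \<longlonglongrightarrow> 0)"

end

theory Submission
  imports Defs
begin

(* Fix eps > 0 and a time t.  The cylinders of length t form a finite partition of the path
   space, and the P-probability of each of them is at least some m_t > 0.  On a cylinder C
   outside the bad set the conditional probabilities of P and Q differ by at most eps, so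
   Q(E \<inter> C) \<le> P(E \<inter> C) / m_t + eps * Q(C); on a bad cylinder we simply use Q(E \<inter> C) \<le> Q(C).
   Summing over the partition gives, for every event E,
       Q(E) \<le> Q(bad set at time t) + P(E) / m_t + eps.
   Merging lets us choose t with a small bad set, so Q is uniformly dominated by P:
   for every eps > 0 there is K with Q(E) \<le> K * P(E) + eps for all events E, and such a
   domination immediately yields the sequential absolute continuity Q \<ll> P.
   The file develops, in this order: elementary facts on finitely additive probabilities,
   the partition into cylinders, the per-cylinder estimate, the global estimate, the
   domination property and its consequence, and finally the theorem. *)

context
  fixes S :: "path set set" and R :: "path set \<Rightarrow> real"
  assumes alg: "algebra UNIV S" and fa: "fa_prob S R"
begin

interpretation algebra UNIV S by (fact alg)

lemma fa_nonneg: "A \<in> S \<Longrightarrow> 0 \<le> R A"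
  using fa unfolding fa_prob_def by blast

lemma fa_union: "A \<in> S \<Longrightarrow> B \<in> S \<Longrightarrow> A \<inter> B = {} \<Longrightarrow> R (A \<union> B) = R A + R B"
  using fa unfolding fa_prob_def by blast

lemma fa_empty: "R {} = 0"
  using fa_union[of "{}" "{}"] by simp

lemma fa_mono:
  assumes "A \<in> S" "B \<in> S" "A \<subseteq> B"
  shows "R A \<le> R B"
proof -
  have "A \<union> (B - A) = B" using assms(3) by blast
  then have "R B = R A + R (B - A)"
    using fa_union[of A "B - A"] assms(1,2) by auto
  moreover have "0 \<le> R (B - A)" using assms by (intro fa_nonneg) auto
  ultimately show ?thesis by simp
qed

lemma fa_le_one: "A \<in> S \<Longrightarrow> R A \<le> 1"
  using fa_mono[of A UNIV] fa unfolding fa_prob_def by simp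

lemma fa_finite_sum:
  assumes "finite I" "\<And>i. i \<in> I \<Longrightarrow> A i \<in> S" "disjoint_family_on A I"
  shows "R (\<Union>i\<in>I. A i) = (\<Sum>i\<in>I. R (A i))"
  using assms
proof (induction I rule: finite_induct)
  case empty
  then show ?case by (simp add: fa_empty)
next
  case (insert x F)
  have "A x \<inter> (\<Union>i\<in>F. A i) = {}"
    using insert.prems(2) insert.hyps(2) unfolding disjoint_family_on_def by auto
  then have "R (\<Union>i\<in>insert x F. A i) = R (A x) + R (\<Union>i\<in>F. A i)"
    using insert.prems(1) by (simp add: fa_union finite_UN insert.hyps(1))
  also have "R (\<Union>i\<in>F. A i) = (\<Sum>i\<in>F. R (A i))"
    using insert.prems by (intro insert.IH) (auto intro: disjoint_family_on_mono)
  finally show ?case using insert.hyps by simp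
qed

end

definition cylinders :: "nat \<Rightarrow> path set set" where
  "cylinders t = range (\<lambda>\<omega>. cyl \<omega> t)"

lemma cyl_self: "\<omega> \<in> cyl \<omega> t"
  unfolding cyl_def by simp

lemma cyl_eq: "\<eta> \<in> cyl \<omega> t \<Longrightarrow> cyl \<eta> t = cyl \<omega> t"
  unfolding cyl_def by auto

text \<open>A cylinder of length t only depends on the first t coordinates of its base, so there
  are at most 2^t of them.\<close>
lemma finite_cylinders: "finite (cylinders t)"
proof -
  have "cyl \<omega> t = cyl (\<lambda>i. i \<in> {i. i < t \<and> \<omega> i}) t" for \<omega>
    unfolding cyl_def by auto
  then have "cylinders t \<subseteq> (\<lambda>B. cyl (\<lambda>i. i \<in> B) t) ` Pow {..<t}"
    unfolding cylinders_def by blast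
  then show ?thesis by (rule finite_subset) simp
qed

lemma disjoint_cylinders: "disjoint_family_on (\<lambda>C. C) (cylinders t)"
  unfolding disjoint_family_on_def cylinders_def by (auto dest: cyl_eq)

lemma Union_cylinders: "(\<Union>C\<in>cylinders t. C) = UNIV"
  unfolding cylinders_def using cyl_self by blast

lemma fa_sum_cylinders:
  assumes "algebra UNIV S" "fa_prob S R" "\<And>C. C \<in> cylinders t \<Longrightarrow> E \<inter> C \<in> S"
  shows "R E = (\<Sum>C\<in>cylinders t. R (E \<inter> C))"
proof -
  have "E = (\<Union>C\<in>cylinders t. E \<inter> C)"
    using Union_cylinders[of t] by blast
  also have "R \<dots> = (\<Sum>C\<in>cylinders t. R (E \<inter> C))"
    using disjoint_cylinders[of t]
    by (intro fa_finite_sum[OF assms(1,2) finite_cylinders]) (auto simp: assms(3) disjoint_family_on_def)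
  finally show ?thesis .
qed

lemma bad_set_cylinder:
  assumes "C \<in> cylinders t"
  shows "C \<subseteq> bad_set S P Q \<epsilon> t \<or> C \<inter> bad_set S P Q \<epsilon> t = {}"
proof -
  obtain \<omega> where C: "C = cyl \<omega> t" using assms unfolding cylinders_def by blast
  have "\<eta> \<in> bad_set S P Q \<epsilon> t \<longleftrightarrow> \<omega> \<in> bad_set S P Q \<epsilon> t" if "\<eta> \<in> C" for \<eta>
    using cyl_eq[of \<eta> \<omega> t] that C unfolding bad_set_def cond_prob_def by simp
  then show ?thesis by blast
qed

lemma good_cylinder_bound:
  assumes "algebra UNIV S" "fa_prob S P" "fa_prob S Q"
    and E: "E \<in> S" and C: "cyl \<omega> t \<in> S"
    and good: "\<omega> \<notin> bad_set S P Q \<epsilon> t"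
    and m: "0 < m" "m \<le> P (cyl \<omega> t)" and eps: "0 \<le> \<epsilon>"
  shows "Q (E \<inter> cyl \<omega> t) \<le> P (E \<inter> cyl \<omega> t) / m + \<epsilon> * Q (cyl \<omega> t)"
proof -
  interpret algebra UNIV S by fact
  define D where "D = cyl \<omega> t"
  have ED: "E \<inter> D \<in> S" using E C unfolding D_def by blast
  have P_ED: "0 \<le> P (E \<inter> D)" using fa_nonneg[OF assms(1,2) ED] .
  have Q_D: "0 \<le> Q D" "Q D \<le> 1"
    using fa_nonneg[OF assms(1,3)] fa_le_one[OF assms(1,3)] C unfolding D_def by auto
  have P_D: "0 < P D" using m unfolding D_def by linarith
  have "P (E \<inter> D) / P D \<le> P (E \<inter> D) / m"
    using P_ED m by (simp add: D_def divide_left_mono)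
  show ?thesis
  proof (cases "Q D = 0")
    case True
    then have "Q (E \<inter> D) = 0"
      using fa_mono[OF assms(1,3) ED, of D] fa_nonneg[OF assms(1,3) ED] C unfolding D_def by auto
    then show ?thesis using P_ED m Q_D eps by (simp add: D_def)
  next
    case False
    then have Q_pos: "0 < Q D" using Q_D by simp
    have "\<bar>cond_prob P E \<omega> t - cond_prob Q E \<omega> t\<bar> \<le> \<epsilon>"
      using good Q_pos E unfolding bad_set_def D_def by (auto simp: not_less)
    then have "Q (E \<inter> D) / Q D \<le> P (E \<inter> D) / P D + \<epsilon>"
      unfolding cond_prob_def D_def by linarith
    then have "Q (E \<inter> D) \<le> Q D * (P (E \<inter> D) / P D) + \<epsilon> * Q D"
      using Q_pos by (simp add: divide_le_eq algebra_simps)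
    also have "Q D * (P (E \<inter> D) / P D) \<le> P (E \<inter> D) / P D"
      using mult_left_le_one_le[OF divide_nonneg_pos[OF P_ED P_D] Q_D] .
    also have "\<dots> \<le> P (E \<inter> D) / m" by fact
    finally show ?thesis unfolding D_def by simp
  qed
qed

lemma global_bound:
  assumes alg: "algebra UNIV S" and cS: "\<And>\<omega> t. cyl \<omega> t \<in> S"
    and fP: "fa_prob S P" and fQ: "fa_prob S Q"
    and E: "E \<in> S" and eps: "0 \<le> \<epsilon>"
    and m: "0 < m" "\<And>C. C \<in> cylinders t \<Longrightarrow> m \<le> P C"
  shows "Q E \<le> Q (bad_set S P Q \<epsilon> t) + P E / m + \<epsilon>"
proof -
  interpret algebra UNIV S by fact
  define bad where "bad = bad_set S P Q \<epsilon> t"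
  have CS: "C \<in> S" if "C \<in> cylinders t" for C
    using that cS unfolding cylinders_def by blast
  have bad_C: "bad \<inter> C \<in> {C, {}}" if "C \<in> cylinders t" for C
    using bad_set_cylinder[OF that] unfolding bad_def by blast
  have bad_CS: "bad \<inter> C \<in> S" if "C \<in> cylinders t" for C
    using bad_C[OF that] CS[OF that] by auto
  have piece: "Q (E \<inter> C) \<le> Q (bad \<inter> C) + P (E \<inter> C) / m + \<epsilon> * Q C"
    if C: "C \<in> cylinders t" for C
  proof -
    have ECS: "E \<inter> C \<in> S" using E CS[OF C] by blast
    have nonneg: "0 \<le> P (E \<inter> C) / m" "0 \<le> \<epsilon> * Q C"
      using fa_nonneg[OF alg fP ECS] fa_nonneg[OF alg fQ CS[OF C]] m eps by auto
    obtain \<omega> where \<omega>: "C = cyl \<omega> t" using C unfolding cylinders_def by blast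
    show ?thesis
    proof (cases "\<omega> \<in> bad")
      case True
      then have "bad \<inter> C = C" using bad_C[OF C] \<omega> cyl_self by blast
      then show ?thesis
        using fa_mono[OF alg fQ ECS CS[OF C]] nonneg by simp
    next
      case False
      then have "bad \<inter> C = {}" using bad_C[OF C] \<omega> cyl_self by blast
      then show ?thesis
        using good_cylinder_bound[OF alg fP fQ E cS False[unfolded bad_def] m(1)] m(2)[OF C]
          eps \<omega> by (simp add: fa_empty[OF alg fQ])
    qed
  qed
  have "Q E = (\<Sum>C\<in>cylinders t. Q (E \<inter> C))"
    using E CS by (intro fa_sum_cylinders[OF alg fQ]) blast
  also have "\<dots> \<le> (\<Sum>C\<in>cylinders t. Q (bad \<inter> C) + P (E \<inter> C) / m + \<epsilon> * Q C)"
    by (rule sum_mono) (rule piece)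
  also have "\<dots> = Q bad + P E / m + \<epsilon>"
  proof -
    have "Q bad = (\<Sum>C\<in>cylinders t. Q (bad \<inter> C))"
      using bad_CS by (intro fa_sum_cylinders[OF alg fQ])
    moreover have "P E = (\<Sum>C\<in>cylinders t. P (E \<inter> C))"
      using E CS by (intro fa_sum_cylinders[OF alg fP]) blast
    moreover have "(\<Sum>C\<in>cylinders t. Q C) = 1"
      using fa_sum_cylinders[OF alg fQ, of t UNIV] CS fQ unfolding fa_prob_def by simp
    ultimately show ?thesis
      by (simp add: sum.distrib sum_divide_distrib[symmetric] sum_distrib_left[symmetric])
  qed
  finally show ?thesis unfolding bad_def .
qed

definition dominated :: "path set set \<Rightarrow> (path set \<Rightarrow> real) \<Rightarrow> (path set \<Rightarrow> real) \<Rightarrow> bool" where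
  "dominated S Q P \<longleftrightarrow> (\<forall>\<epsilon>>0. \<exists>K. \<forall>E\<in>S. Q E \<le> K * P E + \<epsilon>)"

text \<open>Merging yields domination: choose a time with a small bad set and take K = 1/m,
  where m is the smallest P-probability of a cylinder of that length.\<close>
lemma merges_imp_dominated:
  assumes alg: "algebra UNIV S" and cS: "\<And>\<omega> t. cyl \<omega> t \<in> S"
    and fP: "fa_prob S P" and fQ: "fa_prob S Q"
    and pos: "\<And>\<omega> t. 0 < P (cyl \<omega> t)"
    and merge: "merges S P Q"
  shows "dominated S Q P"
  unfolding dominated_def
proof (intro allI impI)
  fix \<epsilon> :: real assume "0 < \<epsilon>"
  then have "0 < \<epsilon> / 2" by simp
  with merge have "(\<lambda>t. Q (bad_set S P Q (\<epsilon> / 2) t)) \<longlonglongrightarrow> 0"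
    unfolding merges_def by blast
  from order_tendstoD(2)[OF this \<open>0 < \<epsilon> / 2\<close>]
  obtain t where small_bad: "Q (bad_set S P Q (\<epsilon> / 2) t) < \<epsilon> / 2"
    by (auto simp: eventually_sequentially)
  define m where "m = Min (P ` cylinders t)"
  have m_pos: "0 < m"
    unfolding m_def using finite_cylinders pos by (auto simp: cylinders_def)
  have m_le: "m \<le> P C" if "C \<in> cylinders t" for C
    unfolding m_def using finite_cylinders that by simp
  have "Q E \<le> (1 / m) * P E + \<epsilon>" if "E \<in> S" for E
  proof -
    have "Q E \<le> Q (bad_set S P Q (\<epsilon> / 2) t) + P E / m + \<epsilon> / 2"
      by (rule global_bound[OF alg cS fP fQ that]) (use m_pos m_le \<open>0 < \<epsilon>\<close> in auto)
    then show ?thesis using small_bad by simp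
  qed
  then show "\<exists>K. \<forall>E\<in>S. Q E \<le> K * P E + \<epsilon>" by blast
qed

lemma dominated_imp_abs_cont:
  assumes nonneg: "\<And>E. E \<in> S \<Longrightarrow> 0 \<le> Q E" and dom: "dominated S Q P"
  shows "abs_cont S Q P"
  unfolding abs_cont_def
proof (intro allI impI)
  fix E :: "nat \<Rightarrow> path set"
  assume ES: "\<forall>n. E n \<in> S" and P_lim: "(\<lambda>n. P (E n)) \<longlonglongrightarrow> 0"
  show "(\<lambda>n. Q (E n)) \<longlonglongrightarrow> 0"
  proof (rule LIMSEQ_I)
    fix r :: real assume "0 < r"
    then obtain K where K: "\<And>F. F \<in> S \<Longrightarrow> Q F \<le> K * P F + r / 2"
      using dom unfolding dominated_def by (meson half_gt_zero)
    have "(\<lambda>n. K * P (E n)) \<longlonglongrightarrow> 0"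
      using tendsto_mult_right_zero[OF P_lim] .
    from order_tendstoD(2)[OF this, of "r / 2"] \<open>0 < r\<close>
    obtain N where N: "\<And>n. N \<le> n \<Longrightarrow> K * P (E n) < r / 2"
      by (auto simp: eventually_sequentially)
    have "norm (Q (E n) - 0) < r" if "N \<le> n" for n
      using K[of "E n"] N[OF that] nonneg[of "E n"] ES by auto
    then show "\<exists>N. \<forall>n\<ge>N. norm (Q (E n) - 0) < r" by blast
  qed
qed

theorem proposition1:
  fixes S :: "path set set" and P Q :: "path set \<Rightarrow> real"
  assumes "sigma_algebra UNIV S"
    and "\<And>\<omega> t. cyl \<omega> t \<in> S"
    and "fa_prob S P" and "fa_prob S Q"
    and "\<And>\<omega> t. P (cyl \<omega> t) > 0"
    and "merges S P Q"
  shows "abs_cont S Q P"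
proof -
  have alg: "algebra UNIV S"
    using assms(1) by (rule sigma_algebra.axioms)
  have "dominated S Q P"
    using merges_imp_dominated[OF alg assms(2-6)] .
  moreover have "\<And>E. E \<in> S \<Longrightarrow> 0 \<le> Q E"
    using fa_nonneg[OF alg assms(4)] .
  ultimately show ?thesis
    by (intro dominated_imp_abs_cont)
qed

end
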